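(* Let $\tau>\sigma$ be coprime positive integers with $\tau-\sigma\not\equiv2\pmod4$, and let $\rho_0\neq0$. Set $a=\tau+\sigma$, $b=\tau-\sigma$, $x=b/a\in\,]0,1[$, $k=\mathrm{round}(1/(2x))$, $\mu=\frac{\pi}{2}-k\pi x$ and $s=\mu/x$. Let $u_{\mathrm{asy}}\in\,]-\pi/2,\pi/2[$ be the unique solution of $u+\tan u=s$, and define $$\theta_{\mathrm{asy}}=\frac{\pi}{b}+\frac{2}{a}\bigl(u_{\mathrm{asy}}-s\bigr).$$ Let $\theta_c$ be the unique solution of $\dot q(\theta)=0$ near the slow-mode node $\pi/b$, i.e. with $\frac a2\theta_c=k\pi+u_c$ for some $u_c\in\,]-\pi/2,\pi/2[$, where $$\dot q(\theta)=\rho_0\Bigl(\sqrt{\tfrac{\tau}{\sigma}}\cos(\tau\theta)+\sqrt{\tfrac{\sigma}{\tau}}\cos(\sigma\theta)\Bigr).$$ Then $$|\theta_c-\theta_{\mathrm{asy}}|\le\frac{\pi^3}{a}x^2=\pi^3\frac{(\tau-\sigma)^2}{(\tau+\sigma)^3}.$$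
   Context: $\mathrm{round}(\cdot)$ denotes rounding to the nearest integer. The function $\dot q(\theta)$ is the velocity of the impulse response of $\ddot q+n\dot z+q=0$, $\ddot z-n\dot q+z=0$ at the resonance $\Omega_1/\Omega_2=\tau/\sigma$, reparametrised by $\theta=t/\sqrt{\tau\sigma}$. It is not the $\theta$-derivative of a function $q$. *)

theory Defs
  imports "HOL-Analysis.Analysis"
begin

definition qdot :: "real \<Rightarrow> real \<Rightarrow> real \<Rightarrow> real \<Rightarrow> real" where
  "qdot \<rho>0 \<tau> \<sigma> \<theta> =
     \<rho>0 * (sqrt (\<tau> / \<sigma>) * cos (\<tau> * \<theta>) + sqrt (\<sigma> / \<tau>) * cos (\<sigma> * \<theta>))"

end

theory Submission
  imports Defs
begin

text \<open>
  Write \<open>a \<theta>c/2 = k\<pi> + u\<close> and \<open>b \<theta>c/2 = \<pi>/2 - v\<close>. By the sum-to-product formula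
  \<open>qdot = 0\<close> becomes \<open>a cos u sin v = b sin u cos v\<close>, i.e. \<open>tan v = x tan u\<close>, where
  \<open>v = \<mu> - x u\<close> has the sign of \<open>u\<close>, so that \<open>|v| \<le> |\<mu>| \<le> \<pi>x/2\<close>. Substituting,
  \<open>u + tan u - s = (tan v - v)/x\<close>, and since \<open>u + tan u\<close> expands distances while
  \<open>tan v - v = O(v\<^sup>3)\<close>, the node \<open>u\<close> differs from \<open>u_asy\<close> by \<open>O(x\<^sup>2)\<close>.
\<close>

lemma tan_minus_self_bounds:
  fixes w :: real
  assumes "0 < w" and "w \<le> pi / 4"
  shows "0 \<le> tan w - w" and "tan w - w \<le> 2 * w ^ 3"
proof -
  have "DERIV (\<lambda>t. tan t - t) t :> inverse ((cos t)\<^sup>2) - 1" if "0 \<le> t" "t \<le> w" for t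
  proof -
    have "cos t > 0" using that assms pi_gt3 by (intro cos_gt_zero_pi) auto
    then show ?thesis by (auto intro!: derivative_eq_intros)
  qed
  from MVT2[OF \<open>0 < w\<close> this] obtain z where z: "0 < z" "z < w"
    and mvt: "tan w - w = w * (inverse ((cos z)\<^sup>2) - 1)" by auto
  have "cos (pi / 4) \<le> cos z" using z assms by (intro cos_monotone_0_pi_le) auto
  then have "(sqrt 2 / 2)\<^sup>2 \<le> (cos z)\<^sup>2" by (intro power_mono) (auto simp: cos_45)
  then have cos_sq: "1 / 2 \<le> (cos z)\<^sup>2" by (simp add: power_divide)
  then have "cos z \<noteq> 0" by auto
  then have slope: "inverse ((cos z)\<^sup>2) - 1 = (sin z)\<^sup>2 / (cos z)\<^sup>2"
    by (simp add: field_simps sin_squared_eq)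
  have "(sin z)\<^sup>2 \<le> z\<^sup>2" using sin_x_le_x[of z] sin_ge_zero[of z] z assms pi_gt3
    by (intro power_mono) auto
  then have "(sin z)\<^sup>2 / (cos z)\<^sup>2 \<le> z\<^sup>2 / (1 / 2)" using cos_sq by (intro frac_le) auto
  also have "\<dots> \<le> 2 * w\<^sup>2" using z by (simp add: power_mono)
  finally have "inverse ((cos z)\<^sup>2) - 1 \<le> 2 * w\<^sup>2" using slope by simp
  then show "tan w - w \<le> 2 * w ^ 3"
    using mvt \<open>0 < w\<close> by (simp add: power3_eq_cube power2_eq_square mult_left_mono mult.assoc)
  show "0 \<le> tan w - w" using mvt slope \<open>0 < w\<close> by simp
qed

lemma abs_tan_minus_self_le:
  fixes w :: real
  assumes "\<bar>w\<bar> \<le> pi / 4"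
  shows "\<bar>tan w - w\<bar> \<le> 2 * \<bar>w\<bar> ^ 3"
proof -
  consider "w = 0" | "w > 0" | "w < 0" by linarith
  then show ?thesis
  proof cases
    case 2
    then show ?thesis using tan_minus_self_bounds[of w] assms by auto
  next
    case 3
    then show ?thesis using tan_minus_self_bounds[of "- w"] assms by auto
  qed simp
qed

lemma abs_diff_le_abs_diff_add_tan:
  fixes u u' :: real
  assumes "\<bar>u\<bar> < pi / 2" and "\<bar>u'\<bar> < pi / 2"
  shows "\<bar>u - u'\<bar> \<le> \<bar>(u + tan u) - (u' + tan u')\<bar>"
proof (cases "u \<le> u'")
  case True
  then have "tan u \<le> tan u'" using assms by (intro tan_mono_le) auto
  then show ?thesis using True by auto
next
  case False
  then have "tan u' \<le> tan u" using assms by (intro tan_mono_le) auto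
  then show ?thesis using False by auto
qed

lemma sign_tan_eq_mult_tan:
  fixes u v x :: real
  assumes "0 < x" and "\<bar>u\<bar> < pi / 2" and "\<bar>v\<bar> < pi / 2" and "tan v = x * tan u"
  shows "0 \<le> u * v"
proof -
  have "(0 < u \<longleftrightarrow> 0 < tan u) \<and> (u < 0 \<longleftrightarrow> tan u < 0)" if "\<bar>u\<bar> < pi / 2" for u :: real
  proof -
    consider "u < 0" | "u = 0" | "0 < u" by linarith
    then show ?thesis
    proof cases
      case 1
      then show ?thesis using that tan_less_zero[of u] by auto
    next
      case 3
      then show ?thesis using that tan_gt_zero[of u] by auto
    qed simp
  qed
  from this[OF assms(2)] this[OF assms(3)] show ?thesis
    using assms(1,4) by (auto simp: zero_less_mult_iff mult_less_0_iff zero_le_mult_iff)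
qed

lemma abs_half_pi_minus_round_le:
  fixes x :: real
  assumes "0 < x"
  shows "\<bar>pi / 2 - real_of_int (round (1 / (2 * x))) * pi * x\<bar> \<le> pi * x / 2"
proof -
  have "pi / 2 - real_of_int (round (1 / (2 * x))) * pi * x
      = pi * x * (1 / (2 * x) - real_of_int (round (1 / (2 * x))))"
    using assms by (simp add: field_simps)
  also have "\<bar>\<dots>\<bar> \<le> pi * x * (1 / 2)"
    using of_int_round_abs_le[of "1 / (2 * x)"] assms
    by (simp add: abs_mult abs_minus_commute mult_left_mono)
  finally show ?thesis by simp
qed

lemma qdot_eq_0_iff:
  assumes "\<rho>0 \<noteq> 0" and "0 < t" and "0 < s"
  shows "qdot \<rho>0 t s \<theta> = 0 \<longleftrightarrow> t * cos (t * \<theta>) + s * cos (s * \<theta>) = 0"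
proof -
  have "sqrt (t / s) * sqrt (t * s) = t" and "sqrt (s / t) * sqrt (t * s) = s"
    using assms by (simp_all add: real_sqrt_mult[symmetric])
  moreover have "qdot \<rho>0 t s \<theta> * sqrt (t * s) = \<rho>0 * (sqrt (t / s) * sqrt (t * s) * cos (t * \<theta>)
      + sqrt (s / t) * sqrt (t * s) * cos (s * \<theta>))"
    by (simp add: qdot_def algebra_simps)
  ultimately have "qdot \<rho>0 t s \<theta> * sqrt (t * s) = \<rho>0 * (t * cos (t * \<theta>) + s * cos (s * \<theta>))"
    by simp
  moreover have "0 < sqrt (t * s)" using assms by simp
  ultimately show ?thesis using assms(1) by (metis mult_eq_0_iff less_irrefl)
qed

lemma weighted_cos_sum_eq:
  fixes t s \<theta> :: real
  shows "t * cos (t * \<theta>) + s * cos (s * \<theta>)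
    = (t + s) * cos ((t + s) / 2 * \<theta>) * cos ((t - s) / 2 * \<theta>)
      - (t - s) * sin ((t + s) / 2 * \<theta>) * sin ((t - s) / 2 * \<theta>)"
proof -
  have "t * \<theta> = (t + s) / 2 * \<theta> + (t - s) / 2 * \<theta>" and "s * \<theta> = (t + s) / 2 * \<theta> - (t - s) / 2 * \<theta>"
    by (simp_all add: field_simps)
  then show ?thesis by (simp only: cos_add cos_diff) (simp add: algebra_simps)
qed

lemma qdot_node_equation:
  fixes k :: int
  assumes "qdot \<rho>0 t s \<theta> = 0" and "\<rho>0 \<noteq> 0" and "0 < t" and "0 < s"
    and "(t + s) / 2 * \<theta> = k * pi + u" and "(t - s) / 2 * \<theta> = pi / 2 - v"
  shows "(t + s) * cos u * sin v = (t - s) * sin u * cos v"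
proof -
  define c where "c = cos (k * pi)"
  have "sin (k * pi) = 0" by (simp add: sin_times_pi_eq_0)
  then have "c \<noteq> 0" and "cos (k * pi + u) = c * cos u" and "sin (k * pi + u) = c * sin u"
    using sin_cos_squared_add[of "k * pi"] by (auto simp: c_def cos_add sin_add)
  moreover have "t * cos (t * \<theta>) + s * cos (s * \<theta>) = 0"
    using assms(1-4) qdot_eq_0_iff by simp
  ultimately have "c * ((t + s) * cos u * sin v - (t - s) * sin u * cos v) = 0"
    using weighted_cos_sum_eq[where t = t and s = s and \<theta> = \<theta>] unfolding assms(5,6)
    by (simp add: cos_diff sin_diff algebra_simps)
  then show ?thesis using \<open>c \<noteq> 0\<close> by simp
qed

lemma node_error_small_ratio:
  fixes x \<mu> u u' :: real
  assumes "0 < x" and "x \<le> 1 / 2" and "\<bar>\<mu>\<bar> \<le> pi * x / 2"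
    and "\<bar>u\<bar> < pi / 2" and "\<bar>u'\<bar> < pi / 2" and "u' + tan u' = \<mu> / x"
    and "cos u * sin (\<mu> - x * u) = x * sin u * cos (\<mu> - x * u)"
  shows "\<bar>u - u'\<bar> \<le> pi ^ 3 * x\<^sup>2 / 4"
proof -
  define v where "v = \<mu> - x * u"
  have "\<bar>x * u\<bar> < pi * x / 2" using assms(1,4) by (simp add: abs_mult)
  then have "\<bar>v\<bar> < pi / 2"
    using assms(2,3) pi_gt3 mult_left_mono[of x "1/2" pi] unfolding v_def by linarith
  then have "cos v > 0" by (intro cos_gt_zero_pi) auto
  moreover have "cos u > 0" using assms(4) by (intro cos_gt_zero_pi) auto
  ultimately have "tan v = x * tan u" using assms(7) by (simp add: v_def tan_def field_simps)
  then have "0 \<le> u * v" using sign_tan_eq_mult_tan[OF assms(1,4) \<open>\<bar>v\<bar> < pi / 2\<close>] by simp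
  then have "0 \<le> (x * u) * v" using assms(1) by (simp add: mult.assoc)
  then have "\<bar>v\<bar> \<le> \<bar>v + x * u\<bar>" by (auto simp: zero_le_mult_iff)
  then have v_bound: "\<bar>v\<bar> \<le> pi * x / 2" using assms(3) unfolding v_def by simp
  have "(u + tan u) - (u' + tan u') = (tan v - v) / x"
    using assms(1,6) \<open>tan v = x * tan u\<close> unfolding v_def by (simp add: field_simps)
  then have "\<bar>u - u'\<bar> \<le> \<bar>tan v - v\<bar> / x"
    using abs_diff_le_abs_diff_add_tan[OF assms(4,5)] assms(1) by simp
  moreover have "\<bar>tan v - v\<bar> \<le> 2 * \<bar>v\<bar> ^ 3"
    using v_bound assms(2) mult_left_mono[of x "1/2" pi] pi_ge_zero
    by (intro abs_tan_minus_self_le) linarith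
  moreover have "2 * \<bar>v\<bar> ^ 3 \<le> 2 * (pi * x / 2) ^ 3"
    using v_bound by (intro mult_left_mono power_mono) auto
  moreover have "2 * (pi * x / 2) ^ 3 / x = pi ^ 3 * x\<^sup>2 / 4"
    using assms(1) by (simp add: power3_eq_cube power2_eq_square)
  ultimately show ?thesis using assms(1) by (smt (verit) divide_right_mono)
qed

lemma node_error:
  fixes x \<mu> u u' :: real
  assumes "0 < x" and "\<bar>\<mu>\<bar> \<le> pi * x / 2"
    and "\<bar>u\<bar> < pi / 2" and "\<bar>u'\<bar> < pi / 2" and "u' + tan u' = \<mu> / x"
    and "cos u * sin (\<mu> - x * u) = x * sin u * cos (\<mu> - x * u)"
  shows "\<bar>u - u'\<bar> \<le> pi ^ 3 * x\<^sup>2 / 2"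
proof (cases "x \<le> 1 / 2")
  case True
  moreover have "0 \<le> pi ^ 3 * x\<^sup>2" by simp
  ultimately show ?thesis using node_error_small_ratio[OF assms(1) True assms(2-6)] by linarith
next
  case False
  have "9 \<le> pi\<^sup>2" using power_mono[of 3 pi 2] pi_gt3 by simp
  have "(1 / 2)\<^sup>2 \<le> x\<^sup>2" using False by (intro power_mono) auto
  then have "2 \<le> 9 * x\<^sup>2" by (simp add: power_divide)
  also have "\<dots> \<le> pi\<^sup>2 * x\<^sup>2" using \<open>9 \<le> pi\<^sup>2\<close> by (intro mult_right_mono) auto
  finally have "pi \<le> pi ^ 3 * x\<^sup>2 / 2"
    using pi_gt_zero mult_left_mono[of 2 "pi\<^sup>2 * x\<^sup>2" pi] by (simp add: power3_eq_cube power2_eq_square)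
  moreover have "\<bar>u - u'\<bar> < pi" using assms(3,4) by linarith
  ultimately show ?thesis by linarith
qed

theorem theorem4:
  fixes \<tau> \<sigma> :: nat and \<rho>0 u_asy \<theta>c :: real
  assumes "0 < \<sigma>" and "\<sigma> < \<tau>" and "coprime \<tau> \<sigma>"
    and "(\<tau> - \<sigma>) mod 4 \<noteq> 2"
    and "\<rho>0 \<noteq> 0"
  defines "a \<equiv> real \<tau> + real \<sigma>"
    and "b \<equiv> real \<tau> - real \<sigma>"
  defines "x \<equiv> b / a"
  defines "k \<equiv> round (1 / (2 * x))"
  defines "\<mu> \<equiv> pi / 2 - real_of_int k * pi * x"
  defines "s \<equiv> \<mu> / x"
  assumes "u_asy \<in> {-pi/2<..<pi/2}" and "u_asy + tan u_asy = s"
    and "qdot \<rho>0 (real \<tau>) (real \<sigma>) \<theta>c = 0"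
    and "a / 2 * \<theta>c - real_of_int k * pi \<in> {-pi/2<..<pi/2}"
  shows "\<bar>\<theta>c - (pi / b + 2 / a * (u_asy - s))\<bar> \<le> pi ^ 3 / a * x ^ 2"
proof -
  define u where "u = a / 2 * \<theta>c - real_of_int k * pi"
  have "0 < a" "0 < b" "0 < x" using assms(1,2) by (auto simp: a_def b_def x_def)
  have "b / 2 * \<theta>c = pi / 2 - (\<mu> - x * u)"
    using \<open>0 < a\<close> by (simp add: u_def \<mu>_def x_def field_simps)
  then have "a * cos u * sin (\<mu> - x * u) = b * sin u * cos (\<mu> - x * u)"
    using qdot_node_equation[OF assms(14,5)] assms(1,2) by (simp add: a_def b_def u_def)
  then have "cos u * sin (\<mu> - x * u) = x * sin u * cos (\<mu> - x * u)"
    using \<open>0 < a\<close> by (simp add: x_def field_simps)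
  moreover have "\<bar>\<mu>\<bar> \<le> pi * x / 2"
    using abs_half_pi_minus_round_le[OF \<open>0 < x\<close>] by (simp add: \<mu>_def k_def)
  moreover have "\<bar>u\<bar> < pi / 2" "\<bar>u_asy\<bar> < pi / 2" using assms(12,15) unfolding u_def abs_less_iff by auto
  ultimately have "\<bar>u - u_asy\<bar> \<le> pi ^ 3 * x\<^sup>2 / 2"
    using node_error[OF \<open>0 < x\<close>] assms(13) by (simp add: s_def)
  have "\<theta>c - (pi / b + 2 / a * (u_asy - s)) = 2 / a * (u - u_asy)"
    using \<open>0 < a\<close> \<open>0 < b\<close> by (simp add: u_def s_def \<mu>_def x_def field_simps)
  then have "\<bar>\<theta>c - (pi / b + 2 / a * (u_asy - s))\<bar> = 2 / a * \<bar>u - u_asy\<bar>"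
    using \<open>0 < a\<close> by (simp only: abs_mult) simp
  also have "\<dots> \<le> 2 / a * (pi ^ 3 * x\<^sup>2 / 2)"
    using \<open>\<bar>u - u_asy\<bar> \<le> pi ^ 3 * x\<^sup>2 / 2\<close> \<open>0 < a\<close> by (intro mult_left_mono) auto
  finally show ?thesis by simp
qed

end
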